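(* Let $q$ be a prime power and $\mathcal{L}$ a non-empty set of lines of $\mathrm{PG}(n,q)$ satisfying (Pt), (Pl), (Sd) and (To) (see context). Let $M$ be a $4$-dimensional subspace of $\mathrm{PG}(n,q)$ and let $P$ be a $(q+1)$-$M$-point. Then one of the following holds: (a) every line through $P$ in the plane $\pi_P$ contains exactly one $(q+1)$-$M$-point other than $P$; (b) there exists a line through $P$ in $\pi_P$ containing no $(q+1)$-$M$-point other than $P$.
   Context: (Pt): every point of $\mathrm{PG}(n,q)$ lies on $0$ or $q+1$ lines of $\mathcal{L}$. (Pl): every plane contains $0$, $1$ or $q+1$ lines of $\mathcal{L}$. (Sd): every solid ($3$-dimensional subspace) contains $0$, $1$, $q+1$ or $2q+1$ lines of $\mathcal{L}$. (To): $|\mathcal{L}|\le q^5+q^4+q^3+q^2+q+1$. A point $X$ is a $(q+1)$-$M$-point if exactly $q+1$ lines of $\mathcal{L}$ pass through $X$ and are contained in $M$. For a point $P$ lying on lines of $\mathcal{L}$, $\pi_P$ denotes the subspace spanned by the $q+1$ lines of $\mathcal{L}$ through $P$ (under these hypotheses this is a plane). *)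

theory Defs
  imports "HOL-Analysis.Analysis"
begin

text \<open>PG(n,q) is modelled as the lattice of subspaces of the vector space 'k^'n over a
finite field 'k (so q = CARD('k), a prime power, and n = CARD('n) - 1).
A projective subspace of projective dimension k is a vector subspace of dimension k+1.\<close>

definition psub :: "nat \<Rightarrow> ('k::field ^ 'n) set \<Rightarrow> bool" where
  "psub k U \<longleftrightarrow> vec.subspace U \<and> vec.dim U = k + 1"

abbreviation ppoint where "ppoint U \<equiv> psub 0 U"
abbreviation pline where "pline U \<equiv> psub 1 U"
abbreviation pplane where "pplane U \<equiv> psub 2 U"
abbreviation psolid where "psolid U \<equiv> psub 3 U"

definition good_line_set :: "('k::{finite,field} ^ 'n) set set \<Rightarrow> bool" where
  "good_line_set L \<longleftrightarrow>
     (\<forall>l\<in>L. pline l) \<and>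
     (\<forall>X. ppoint X \<longrightarrow> card {l\<in>L. X \<subseteq> l} = 0 \<or> card {l\<in>L. X \<subseteq> l} = CARD('k) + 1) \<and>
     (\<forall>E. pplane E \<longrightarrow> card {l\<in>L. l \<subseteq> E} \<in> {0, 1, CARD('k) + 1}) \<and>
     (\<forall>S. psolid S \<longrightarrow> card {l\<in>L. l \<subseteq> S} \<in> {0, 1, CARD('k) + 1, 2 * CARD('k) + 1}) \<and>
     card L \<le> CARD('k)^5 + CARD('k)^4 + CARD('k)^3 + CARD('k)^2 + CARD('k) + 1"

definition qM_point :: "('k::{finite,field} ^ 'n) set set \<Rightarrow> ('k ^ 'n) set \<Rightarrow> ('k ^ 'n) set \<Rightarrow> bool" where
  "qM_point L M X \<longleftrightarrow> ppoint X \<and> card {l\<in>L. X \<subseteq> l \<and> l \<subseteq> M} = CARD('k) + 1"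

definition pi_sub :: "('k::field ^ 'n) set set \<Rightarrow> ('k ^ 'n) set \<Rightarrow> ('k ^ 'n) set" where
  "pi_sub L P = vec.span (\<Union>{l\<in>L. P \<subseteq> l})"

end

theory Submission
  imports Defs
begin

text \<open>Call a point or plane full if it lies on, resp. contains, q+1 lines of L.
  If a point P is full, the bound 2q+1 of (Sd) forces these lines to be
  coplanar: three non-coplanar ones would span a solid containing three planes with q+1
  lines each. So pi_P is a plane whose lines in L are exactly the lines through P, and as
  a plane has only q+1 lines through P, every line of pi_P through P is in L. For another
  (q+1)-M-point Z in pi_P the line PZ therefore lies in both pi_P and pi_Z, so these planes
  span a solid inside M; distinct Z give distinct solids by the same three-planes argument.
  Since only q+1 solids of M contain pi_P, there are at most q+1 such points Z. They are
  distributed over the q+1 lines of pi_P through P, so either some line gets none or each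
  gets exactly one.\<close>

lemma subspace_dim_less:
  fixes A B :: "('k::field ^ 'n) set"
  assumes "vec.subspace A" "vec.subspace B" "A \<subseteq> B" "A \<noteq> B"
  shows "vec.dim A < vec.dim B"
  using assms vec.subspace_dim_equal[of A B] vec.dim_subset[of A B] by linarith

lemma dim_span_Un_plus_dim_Int:
  fixes A B :: "('k::field ^ 'n) set"
  assumes "vec.subspace A" "vec.subspace B"
  shows "vec.dim (vec.span (A \<union> B)) + vec.dim (A \<inter> B) = vec.dim A + vec.dim B"
proof -
  have A: "vec.span A = A" and B: "vec.span B = B" using assms by (simp_all add: vec.span_eq_iff)
  have "vec.span (A \<union> B) = {x + y |x y. x \<in> A \<and> y \<in> B}"
    using vec.span_Un[of A B] unfolding A B .
  then show ?thesis using vec.dim_sums_Int[OF assms] by simp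
qed

lemma psub_eq_if_subset:
  assumes "psub k A" "psub k B" "A \<subseteq> B"
  shows "A = B"
  using assms vec.subspace_dim_equal[of A B] by (simp add: psub_def)

lemma psub_Int_eq:
  assumes "psub k X" "psub (Suc k) A" "vec.subspace B" "X \<subseteq> A \<inter> B" "\<not> A \<subseteq> B"
  shows "A \<inter> B = X"
proof -
  have sI: "vec.subspace (A \<inter> B)" using assms by (simp add: psub_def vec.subspace_inter)
  have "vec.dim (A \<inter> B) < vec.dim A"
    using subspace_dim_less[OF sI, of A] assms by (auto simp: psub_def)
  moreover have "vec.dim X \<le> vec.dim (A \<inter> B)" using vec.dim_subset assms(4) .
  ultimately have "vec.dim (A \<inter> B) \<le> vec.dim X" using assms by (simp add: psub_def)
  then have "X = A \<inter> B" using vec.subspace_dim_equal[OF _ sI] assms by (simp add: psub_def)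
  then show ?thesis by simp
qed

lemma psub_span_Un:
  assumes "psub i A" "psub j B" "psub k (A \<inter> B)" "i + j = m + k"
  shows "psub m (vec.span (A \<union> B))"
  using dim_span_Un_plus_dim_Int[of A B] assms by (auto simp: psub_def vec.subspace_span)

lemma plines_Int_eq_point:
  assumes "pline l" "pline l'" "l \<noteq> l'" "ppoint X" "X \<subseteq> l" "X \<subseteq> l'"
  shows "l \<inter> l' = X"
  using psub_Int_eq[of 0 X l l'] psub_eq_if_subset[of 1 l l'] assms by (auto simp: psub_def)

lemma pplanes_Int_eq_line:
  assumes "pplane E" "pplane F" "E \<noteq> F" "pline m" "m \<subseteq> E" "m \<subseteq> F"
  shows "E \<inter> F = m"
  using psub_Int_eq[of 1 m E F] psub_eq_if_subset[of 2 E F] assms by (auto simp: psub_def)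

lemma pline_span_points:
  assumes "ppoint X" "ppoint Y" "X \<noteq> Y"
  shows "pline (vec.span (X \<union> Y))"
proof -
  have sI: "vec.subspace (X \<inter> Y)" using assms by (simp add: psub_def vec.subspace_inter)
  have "X \<inter> Y \<noteq> X" using assms psub_eq_if_subset[of 0 X Y] by blast
  then have "vec.dim (X \<inter> Y) = 0"
    using subspace_dim_less[OF sI, of X] assms by (simp add: psub_def)
  moreover have "vec.dim (vec.span (X \<union> Y)) + vec.dim (X \<inter> Y) = vec.dim X + vec.dim Y"
    using dim_span_Un_plus_dim_Int[of X Y] assms by (simp add: psub_def)
  ultimately have "vec.dim (vec.span (X \<union> Y)) = 2" using assms unfolding psub_def by linarith
  then show ?thesis by (simp add: psub_def vec.subspace_span)
qed

lemma pplane_span_plines: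
  assumes "pline l" "pline l'" "l \<noteq> l'" "ppoint X" "X \<subseteq> l" "X \<subseteq> l'"
  shows "pplane (vec.span (l \<union> l'))"
  by (rule psub_span_Un[of 1 l 1 l' 0]) (use plines_Int_eq_point[OF assms] assms in simp_all)

lemma psolid_span_pplane_pline:
  assumes "pplane E" "pline l" "\<not> l \<subseteq> E" "ppoint X" "X \<subseteq> E" "X \<subseteq> l"
  shows "psolid (vec.span (E \<union> l))"
proof (rule psub_span_Un[of 2 E 1 l 0])
  show "ppoint (E \<inter> l)"
    using psub_Int_eq[of 0 X l E] assms by (simp add: Int_commute psub_def)
qed (use assms in simp_all)

lemma psolid_span_pplanes:
  assumes "pplane E" "pplane F" "E \<noteq> F" "pline m" "m \<subseteq> E" "m \<subseteq> F"
  shows "psolid (vec.span (E \<union> F))"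
  by (rule psub_span_Un[of 2 E 2 F 1]) (use pplanes_Int_eq_line[OF assms] assms in simp_all)

lemma card_span_insert:
  fixes S :: "('k::{finite,field} ^ 'n) set"
  assumes "v \<notin> vec.span S"
  shows "card (vec.span (insert v S)) = CARD('k) * card (vec.span S)"
proof -
  define f where "f = (\<lambda>(c::'k, u). c *s v + u)"
  have inj: "inj_on f (UNIV \<times> vec.span S)"
  proof (rule inj_onI)
    fix a b assume a: "a \<in> UNIV \<times> vec.span S" and b: "b \<in> UNIV \<times> vec.span S" and e: "f a = f b"
    obtain c u where cu: "a = (c, u)" by force
    obtain c' u' where cu': "b = (c', u')" by force
    have u: "u \<in> vec.span S" "u' \<in> vec.span S" using a b cu cu' by auto
    have eq: "c *s v + u = c' *s v + u'" using e cu cu' by (simp add: f_def)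
    have "(c - c') *s v = u' - u" using eq by (simp add: algebra_simps vector_sub_rdistrib)
    show "a = b"
    proof (cases "c = c'")
      case True then show ?thesis using eq cu cu' by simp
    next
      case False
      have "v = inverse (c - c') *s ((c - c') *s v)" using False
        by (metis vector_smult_assoc left_inverse right_minus_eq vector_smult_lid)
      also have "\<dots> = inverse (c - c') *s (u' - u)" using \<open>(c - c') *s v = u' - u\<close> by simp
      finally have "v \<in> vec.span S" using u by (metis vec.span_diff vec.span_scale)
      then show ?thesis using assms by simp
    qed
  qed
  have img: "f ` (UNIV \<times> vec.span S) = vec.span (insert v S)"
  proof
    show "f ` (UNIV \<times> vec.span S) \<subseteq> vec.span (insert v S)"
    proof (clarsimp simp: f_def vec.span_breakdown_eq)
      fix a b assume "b \<in> vec.span S"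
      then have "a *s v + b - a *s v \<in> vec.span S" by simp
      then show "\<exists>k. a *s v + b - k *s v \<in> vec.span S" by blast
    qed
    show "vec.span (insert v S) \<subseteq> f ` (UNIV \<times> vec.span S)"
    proof
      fix x assume "x \<in> vec.span (insert v S)"
      then obtain k where k: "x - k *s v \<in> vec.span S" using vec.span_breakdown_eq by blast
      have "x = f (k, x - k *s v)" by (simp add: f_def)
      then show "x \<in> f ` (UNIV \<times> vec.span S)" using k by blast
    qed
  qed
  have "card (vec.span (insert v S)) = card ((UNIV::'k set) \<times> vec.span S)"
    using card_image[OF inj] img by metis
  also have "\<dots> = CARD('k) * card (vec.span S)" by (simp add: card_cartesian_product)
  finally show ?thesis .
qed

lemma card_span_independent:
  fixes B :: "('k::{finite,field} ^ 'n) set"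
  assumes "vec.independent B"
  shows "card (vec.span B) = CARD('k) ^ card B"
proof -
  have "finite B" using assms vec.finiteI_independent by blast
  then show ?thesis using assms
  proof (induction B rule: finite_induct)
    case empty then show ?case by simp
  next
    case (insert v F)
    have iF: "vec.independent F" using insert.prems vec.independent_mono by blast
    have "v \<notin> vec.span F" using insert.prems insert.hyps vec.independent_insert by metis
    then show ?case using card_span_insert[of v F] insert iF by simp
  qed
qed

lemma card_subspace:
  fixes U :: "('k::{finite,field} ^ 'n) set"
  assumes "vec.subspace U"
  shows "card U = CARD('k) ^ vec.dim U"
proof -
  obtain B where B: "B \<subseteq> U" "vec.independent B" "U \<subseteq> vec.span B" "card B = vec.dim U"
    using vec.basis_exists by blast
  have "vec.span B = U" using B assms vec.span_minimal by blast
  then show ?thesis using card_span_independent[OF B(2)] B(4) by simp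
qed

lemma card_field_ge2: "CARD('k::{finite,field}) \<ge> 2"
proof -
  have "card {0::'k, 1} \<le> CARD('k)" by (rule card_mono) auto
  then show ?thesis by simp
qed

text \<open>Counting the vectors of B outside A: each intermediate subspace contributes
  q^(a+1) - q^a of them, disjointly, out of q^(a+2) - q^a.\<close>
lemma card_subspaces_between_le:
  fixes A B :: "('k::{finite,field} ^ 'n) set"
  assumes sA: "vec.subspace A" and sB: "vec.subspace B" and AB: "A \<subseteq> B"
    and dB: "vec.dim B = vec.dim A + 2"
  shows "card {C. vec.subspace C \<and> A \<subseteq> C \<and> C \<subseteq> B \<and> vec.dim C = vec.dim A + 1}
    \<le> CARD('k) + 1"
proof -
  define q where "q = CARD('k)"
  define x where "x = q ^ vec.dim A"
  define \<C> where "\<C> = {C. vec.subspace C \<and> A \<subseteq> C \<and> C \<subseteq> B \<and> vec.dim C = vec.dim A + 1}"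
  have q2: "q \<ge> 2" unfolding q_def by (rule card_field_ge2)
  have cA: "card A = x" using card_subspace[OF sA] by (simp add: x_def q_def)
  have cB: "card B = q * q * x" using card_subspace[OF sB] dB by (simp add: x_def q_def)
  have cC: "card (C - A) = q * x - x" if "C \<in> \<C>" for C
  proof -
    have "card C = q * x" using that card_subspace[of C] by (simp add: \<C>_def x_def q_def)
    then show ?thesis using that cA by (simp add: \<C>_def card_Diff_subset)
  qed
  have disj: "(C - A) \<inter> (C' - A) = {}" if "C \<in> \<C>" "C' \<in> \<C>" "C \<noteq> C'" for C C'
  proof (rule ccontr)
    assume "(C - A) \<inter> (C' - A) \<noteq> {}"
    then obtain v where v: "v \<in> C" "v \<in> C'" "v \<notin> A" by blast
    have sD: "vec.subspace (C \<inter> C')" using that vec.subspace_inter by (auto simp: \<C>_def)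
    have "A \<subseteq> C \<inter> C'" "A \<noteq> C \<inter> C'" using that v by (auto simp: \<C>_def)
    then have "vec.dim (C \<inter> C') > vec.dim A" using subspace_dim_less[OF sA sD] by simp
    then have "C \<inter> C' = C" "C \<inter> C' = C'"
      using that sD vec.subspace_dim_equal[of "C \<inter> C'" C] vec.subspace_dim_equal[of "C \<inter> C'" C']
      by (auto simp: \<C>_def)
    then show False using that by simp
  qed
  have "card \<C> * (q * x - x) = (\<Sum>C\<in>\<C>. card (C - A))" using cC by simp
  also have "\<dots> = card (\<Union>C\<in>\<C>. C - A)"
    by (rule card_UN_disjoint[symmetric]) (use disj in auto)
  also have "\<dots> \<le> card (B - A)" by (rule card_mono) (auto simp: \<C>_def)
  also have "\<dots> = (q + 1) * (q * x - x)"
    using cA cB AB by (simp add: card_Diff_subset algebra_simps diff_mult_distrib2)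
  finally have "card \<C> * (q * x - x) \<le> (q + 1) * (q * x - x)" .
  moreover have "q * x - x > 0" using q2 by (simp add: x_def)
  ultimately have "card \<C> \<le> q + 1" using mult_le_cancel2 by blast
  then show ?thesis by (simp add: \<C>_def q_def)
qed

lemma
  fixes L :: "('k::{finite,field} ^ 'n) set set"
  assumes "good_line_set L"
  shows good_line_set_pline: "l \<in> L \<Longrightarrow> pline l"
    and good_line_set_point:
      "ppoint X \<Longrightarrow> card {l\<in>L. X \<subseteq> l} = 0 \<or> card {l\<in>L. X \<subseteq> l} = CARD('k) + 1"
    and good_line_set_plane: "pplane E \<Longrightarrow> card {l\<in>L. l \<subseteq> E} \<in> {0, 1, CARD('k) + 1}"
    and good_line_set_solid: "psolid S \<Longrightarrow> card {l\<in>L. l \<subseteq> S} \<le> 2 * CARD('k) + 1"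
proof -
  show "l \<in> L \<Longrightarrow> pline l"
    and "ppoint X \<Longrightarrow> card {l\<in>L. X \<subseteq> l} = 0 \<or> card {l\<in>L. X \<subseteq> l} = CARD('k) + 1"
    and "pplane E \<Longrightarrow> card {l\<in>L. l \<subseteq> E} \<in> {0, 1, CARD('k) + 1}"
    using assms unfolding good_line_set_def by blast+
  assume "psolid S"
  then have "card {l\<in>L. l \<subseteq> S} \<in> {0, 1, CARD('k) + 1, 2 * CARD('k) + 1}"
    using assms unfolding good_line_set_def by blast
  moreover have "c \<le> 2 * CARD('k) + 1" if "c \<in> {0, 1, CARD('k) + 1, 2 * CARD('k) + 1}" for c
    using that by auto
  ultimately show "card {l\<in>L. l \<subseteq> S} \<le> 2 * CARD('k) + 1" by blast
qed

lemma card_lines_in_pplane_eq: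
  fixes L :: "('k::{finite,field} ^ 'n) set set"
  assumes gl: "good_line_set L" and E: "pplane E"
    and l: "l \<in> L" "l' \<in> L" "l \<noteq> l'" "l \<subseteq> E" "l' \<subseteq> E"
  shows "card {l\<in>L. l \<subseteq> E} = CARD('k) + 1"
proof -
  have "card {l, l'} \<le> card {l\<in>L. l \<subseteq> E}" by (rule card_mono) (use l in auto)
  then have "2 \<le> card {l\<in>L. l \<subseteq> E}" using l(3) by simp
  with good_line_set_plane[OF gl E] show ?thesis
    unfolding insert_iff empty_iff by (elim disjE) simp_all
qed

lemma card_Un3_ge:
  assumes "finite A" "finite B" "finite C" "card A = k" "card B = k" "card C = k"
    "card (A \<inter> B) \<le> 1" "card (A \<inter> C) \<le> 1" "card (B \<inter> C) \<le> 1"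
  shows "3 * k \<le> card (A \<union> B \<union> C) + 3"
proof -
  have AB: "card (A \<union> B) + card (A \<inter> B) = 2 * k" using card_Un_Int[of A B] assms by simp
  have "(A \<union> B) \<inter> C = (A \<inter> C) \<union> (B \<inter> C)" by blast
  then have "card ((A \<union> B) \<inter> C) \<le> 2" using card_Un_le[of "A \<inter> C" "B \<inter> C"] assms by simp
  moreover have "card (A \<union> B \<union> C) + card ((A \<union> B) \<inter> C) = card (A \<union> B) + k"
    using card_Un_Int[of "A \<union> B" C] assms by simp
  ultimately show ?thesis using AB assms by linarith
qed

lemma card_common_lines_pplanes_le1:
  assumes gl: "good_line_set L" and "pplane E" "pplane F" "E \<noteq> F"
  shows "card ({l\<in>L. l \<subseteq> E} \<inter> {l\<in>L. l \<subseteq> F}) \<le> 1"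
proof -
  have "l = l'" if "l \<in> L" "l' \<in> L" "l \<subseteq> E \<inter> F" "l' \<subseteq> E \<inter> F" for l l'
  proof -
    have "E \<inter> F = l" "E \<inter> F = l'"
      using pplanes_Int_eq_line[OF assms(2-4)] good_line_set_pline[OF gl] that by auto
    then show ?thesis by simp
  qed
  then show ?thesis by (auto simp: card_le_Suc0_iff_eq)
qed

text \<open>Three such planes would carry at least 3q lines, exceeding the bound 2q+1 of (Sd).\<close>
lemma no_three_full_pplanes_in_psolid:
  fixes L :: "('k::{finite,field} ^ 'n) set set"
  assumes gl: "good_line_set L" and S: "psolid S"
    and E: "pplane E1" "pplane E2" "pplane E3"
    and distinct: "E1 \<noteq> E2" "E1 \<noteq> E3" "E2 \<noteq> E3"
    and sub: "E1 \<subseteq> S" "E2 \<subseteq> S" "E3 \<subseteq> S"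
    and full: "card {l\<in>L. l \<subseteq> E1} = CARD('k) + 1" "card {l\<in>L. l \<subseteq> E2} = CARD('k) + 1"
      "card {l\<in>L. l \<subseteq> E3} = CARD('k) + 1"
  shows False
proof -
  let ?U = "{l\<in>L. l \<subseteq> E1} \<union> {l\<in>L. l \<subseteq> E2} \<union> {l\<in>L. l \<subseteq> E3}"
  have "3 * (CARD('k) + 1) \<le> card ?U + 3"
    by (rule card_Un3_ge) (use full card_common_lines_pplanes_le1[OF gl] E distinct in auto)
  moreover have "card ?U \<le> card {l\<in>L. l \<subseteq> S}" by (rule card_mono) (use sub in auto)
  ultimately show False using good_line_set_solid[OF gl S] card_field_ge2[where 'k='k] by arith
qed

lemma full_point_two_lines:
  fixes L :: "('k::{finite,field} ^ 'n) set set"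
  assumes "card {l\<in>L. X \<subseteq> l} = CARD('k) + 1"
  obtains l l' where "l \<in> L" "l' \<in> L" "l \<noteq> l'" "X \<subseteq> l" "X \<subseteq> l'"
proof -
  have "\<not> card {l\<in>L. X \<subseteq> l} \<le> 1" using assms card_field_ge2[where 'k='k] by simp
  then show ?thesis using that by (auto simp: card_le_Suc0_iff_eq)
qed

lemma full_point_lines_coplanar:
  fixes L :: "('k::{finite,field} ^ 'n) set set"
  assumes gl: "good_line_set L" and X: "ppoint X"
    and l: "l1 \<in> L" "l2 \<in> L" "l3 \<in> L" "l1 \<noteq> l2" "X \<subseteq> l1" "X \<subseteq> l2" "X \<subseteq> l3"
  shows "l3 \<subseteq> vec.span (l1 \<union> l2)"
proof (rule ccontr)
  define E where "E = vec.span (l1 \<union> l2)"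
  define E13 where "E13 = vec.span (l1 \<union> l3)"
  define E23 where "E23 = vec.span (l2 \<union> l3)"
  assume "\<not> l3 \<subseteq> vec.span (l1 \<union> l2)"
  then have l3E: "\<not> l3 \<subseteq> E" by (simp add: E_def)
  have pl: "pline l1" "pline l2" "pline l3" using l good_line_set_pline[OF gl] by auto
  have in_span: "l1 \<subseteq> E" "l2 \<subseteq> E" "l1 \<subseteq> E13" "l3 \<subseteq> E13" "l2 \<subseteq> E23" "l3 \<subseteq> E23"
    unfolding E_def E13_def E23_def by (meson le_sup_iff vec.span_superset)+
  then have l3_ne: "l1 \<noteq> l3" "l2 \<noteq> l3" using l3E by auto
  have pE: "pplane E" "pplane E13" "pplane E23"
    unfolding E_def E13_def E23_def
    using pplane_span_plines[OF pl(1,2) l(4) X l(5,6)] pplane_span_plines[OF pl(1,3) l3_ne(1) X l(5,7)]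
      pplane_span_plines[OF pl(2,3) l3_ne(2) X l(6,7)] by simp_all
  define S where "S = vec.span (E \<union> l3)"
  have pS: "psolid S"
    unfolding S_def by (rule psolid_span_pplane_pline) (use pE pl l3E X l in_span in auto)
  have sS: "vec.subspace S" using pS by (simp add: psub_def)
  have ES: "E \<subseteq> S" "l3 \<subseteq> S" unfolding S_def by (meson le_sup_iff vec.span_superset)+
  have sub: "E13 \<subseteq> S" "E23 \<subseteq> S"
    unfolding E13_def E23_def using ES in_span(1,2) by (auto intro!: vec.span_minimal[OF _ sS])
  have "E13 \<noteq> E23"
  proof
    assume "E13 = E23"
    then have "E \<subseteq> E13" unfolding E_def
      using vec.span_minimal[of "l1 \<union> l2" E13] pE in_span by (simp add: psub_def)
    then show False using psub_eq_if_subset[of 2 E E13] pE l3E in_span by simp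
  qed
  moreover have "E \<noteq> E13" "E \<noteq> E23" using l3E in_span by auto
  moreover have "card {l\<in>L. l \<subseteq> E} = CARD('k) + 1"
    by (rule card_lines_in_pplane_eq[OF gl pE(1) l(1,2,4)]) (use in_span in auto)
  moreover have "card {l\<in>L. l \<subseteq> E13} = CARD('k) + 1"
    by (rule card_lines_in_pplane_eq[OF gl pE(2) l(1,3) l3_ne(1)]) (use in_span in auto)
  moreover have "card {l\<in>L. l \<subseteq> E23} = CARD('k) + 1"
    by (rule card_lines_in_pplane_eq[OF gl pE(3) l(2,3) l3_ne(2)]) (use in_span in auto)
  ultimately show False using no_three_full_pplanes_in_psolid[OF gl pS pE _ _ _ ES(1) sub] by blast
qed

lemma full_point_pi_sub:
  fixes L :: "('k::{finite,field} ^ 'n) set set"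
  assumes gl: "good_line_set L" and X: "ppoint X" and full: "card {l\<in>L. X \<subseteq> l} = CARD('k) + 1"
  shows "pplane (pi_sub L X)" and "{l\<in>L. l \<subseteq> pi_sub L X} = {l\<in>L. X \<subseteq> l}"
    and "card {l\<in>L. l \<subseteq> pi_sub L X} = CARD('k) + 1" and "X \<subseteq> pi_sub L X"
proof -
  obtain l1 l2 where l: "l1 \<in> L" "l2 \<in> L" "l1 \<noteq> l2" "X \<subseteq> l1" "X \<subseteq> l2"
    using full_point_two_lines[OF full] .
  define E where "E = vec.span (l1 \<union> l2)"
  have pE: "pplane E"
    unfolding E_def using pplane_span_plines X l good_line_set_pline[OF gl] by blast
  have "\<Union>{l\<in>L. X \<subseteq> l} \<subseteq> E"
    using full_point_lines_coplanar[OF gl X l(1,2) _ l(3-5)] by (auto simp: E_def)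
  then have "pi_sub L X \<subseteq> E"
    unfolding pi_sub_def by (rule vec.span_minimal) (use pE in \<open>simp add: psub_def\<close>)
  moreover have "E \<subseteq> pi_sub L X"
    unfolding pi_sub_def E_def by (rule vec.span_mono) (use l in auto)
  ultimately have E_eq: "pi_sub L X = E" by blast
  then show "pplane (pi_sub L X)" using pE by simp
  have lines_E: "{l\<in>L. X \<subseteq> l} \<subseteq> {l\<in>L. l \<subseteq> E}"
    using \<open>\<Union>{l\<in>L. X \<subseteq> l} \<subseteq> E\<close> by auto
  have "card {l\<in>L. l \<subseteq> E} = CARD('k) + 1"
    by (rule card_lines_in_pplane_eq[OF gl pE l(1-3)]) (use E_eq l lines_E in auto)
  then show "{l\<in>L. l \<subseteq> pi_sub L X} = {l\<in>L. X \<subseteq> l}"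
    using card_subset_eq[OF _ lines_E] full E_eq by simp
  then show "card {l\<in>L. l \<subseteq> pi_sub L X} = CARD('k) + 1" using full by simp
  show "X \<subseteq> pi_sub L X" using l E_eq vec.span_superset[of "l1 \<union> l2"] by (auto simp: E_def)
qed

lemma pi_sub_inj_on_full_points:
  fixes L :: "('k::{finite,field} ^ 'n) set set"
  assumes gl: "good_line_set L"
    and X: "ppoint X" "card {l\<in>L. X \<subseteq> l} = CARD('k) + 1"
    and Y: "ppoint Y" "card {l\<in>L. Y \<subseteq> l} = CARD('k) + 1"
    and "pi_sub L X = pi_sub L Y"
  shows "X = Y"
proof -
  obtain l l' where l: "l \<in> L" "l' \<in> L" "l \<noteq> l'" "X \<subseteq> l" "X \<subseteq> l'"
    using full_point_two_lines[OF X(2)] .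
  have "{l\<in>L. X \<subseteq> l} = {l\<in>L. Y \<subseteq> l}"
    using full_point_pi_sub(2)[OF gl X] full_point_pi_sub(2)[OF gl Y] assms(6) by simp
  then have "Y \<subseteq> l" "Y \<subseteq> l'" using l by blast+
  then show ?thesis
    using plines_Int_eq_point[of l l' X] plines_Int_eq_point[of l l' Y] l X Y
      good_line_set_pline[OF gl] by simp
qed

lemma qM_point_full:
  fixes L :: "('k::{finite,field} ^ 'n) set set"
  assumes gl: "good_line_set L" and sM: "vec.subspace M" and X: "qM_point L M X"
  shows "ppoint X" and "card {l\<in>L. X \<subseteq> l} = CARD('k) + 1" and "pi_sub L X \<subseteq> M"
proof -
  show pX: "ppoint X" using X by (simp add: qM_point_def)
  have cM: "card {l\<in>L. X \<subseteq> l \<and> l \<subseteq> M} = CARD('k) + 1" using X by (simp add: qM_point_def)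
  have "card {l\<in>L. X \<subseteq> l \<and> l \<subseteq> M} \<le> card {l\<in>L. X \<subseteq> l}" by (rule card_mono) auto
  then show c: "card {l\<in>L. X \<subseteq> l} = CARD('k) + 1"
    using good_line_set_point[OF gl pX] cM by linarith
  have "{l\<in>L. X \<subseteq> l \<and> l \<subseteq> M} = {l\<in>L. X \<subseteq> l}"
    by (rule card_subset_eq) (use c cM in auto)
  then show "pi_sub L X \<subseteq> M"
    unfolding pi_sub_def by (intro vec.span_minimal[OF _ sM]) blast
qed

lemma plines_in_pi_sub_eq:
  fixes L :: "('k::{finite,field} ^ 'n) set set"
  assumes gl: "good_line_set L" and P: "ppoint P" "card {l\<in>L. P \<subseteq> l} = CARD('k) + 1"
  shows "{m. pline m \<and> P \<subseteq> m \<and> m \<subseteq> pi_sub L P} = {l\<in>L. P \<subseteq> l}"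
proof -
  have sP: "vec.subspace P" "vec.dim P = 1" using P(1) by (simp_all add: psub_def)
  have sE: "vec.subspace (pi_sub L P)" "vec.dim (pi_sub L P) = 3"
    using full_point_pi_sub(1)[OF gl P] by (simp_all add: psub_def)
  have sub: "{l\<in>L. P \<subseteq> l} \<subseteq> {m. pline m \<and> P \<subseteq> m \<and> m \<subseteq> pi_sub L P}"
  proof
    fix l assume l: "l \<in> {l\<in>L. P \<subseteq> l}"
    then have "l \<subseteq> pi_sub L P" using full_point_pi_sub(2)[OF gl P] by blast
    then show "l \<in> {m. pline m \<and> P \<subseteq> m \<and> m \<subseteq> pi_sub L P}"
      using l good_line_set_pline[OF gl] by simp
  qed
  have "{m. pline m \<and> P \<subseteq> m \<and> m \<subseteq> pi_sub L P}
      \<subseteq> {C. vec.subspace C \<and> P \<subseteq> C \<and> C \<subseteq> pi_sub L P \<and> vec.dim C = vec.dim P + 1}"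
    using sP by (auto simp: psub_def)
  then have "card {m. pline m \<and> P \<subseteq> m \<and> m \<subseteq> pi_sub L P}
      \<le> card {C. vec.subspace C \<and> P \<subseteq> C \<and> C \<subseteq> pi_sub L P \<and> vec.dim C = vec.dim P + 1}"
    by (rule card_mono[rotated]) simp
  also have "\<dots> \<le> CARD('k) + 1"
    by (rule card_subspaces_between_le[OF sP(1) sE(1) full_point_pi_sub(4)[OF gl P]])
      (simp add: sP sE)
  finally have "card {m. pline m \<and> P \<subseteq> m \<and> m \<subseteq> pi_sub L P} \<le> CARD('k) + 1" .
  moreover have "card {l\<in>L. P \<subseteq> l} \<le> card {m. pline m \<and> P \<subseteq> m \<and> m \<subseteq> pi_sub L P}"
    by (rule card_mono[OF _ sub]) simp
  ultimately have "card {l\<in>L. P \<subseteq> l} = card {m. pline m \<and> P \<subseteq> m \<and> m \<subseteq> pi_sub L P}"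
    using P(2) by linarith
  then show ?thesis using card_subset_eq[OF _ sub] by simp
qed

lemma psolid_span_pi_subs:
  fixes L :: "('k::{finite,field} ^ 'n) set set"
  assumes gl: "good_line_set L"
    and P: "ppoint P" "card {l\<in>L. P \<subseteq> l} = CARD('k) + 1"
    and Z: "ppoint Z" "card {l\<in>L. Z \<subseteq> l} = CARD('k) + 1"
    and "Z \<noteq> P" "Z \<subseteq> pi_sub L P"
  shows "psolid (vec.span (pi_sub L P \<union> pi_sub L Z))"
proof -
  define m where "m = vec.span (P \<union> Z)"
  have m: "pline m" "P \<subseteq> m" "Z \<subseteq> m"
    using pline_span_points[OF P(1) Z(1)] assms(6) vec.span_superset[of "P \<union> Z"]
    by (auto simp: m_def)
  have "m \<subseteq> pi_sub L P"
    unfolding m_def using full_point_pi_sub(1,4)[OF gl P] assms(7)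
    by (intro vec.span_minimal) (auto simp: psub_def)
  then have "m \<in> L" using plines_in_pi_sub_eq[OF gl P] m by blast
  then have "m \<subseteq> pi_sub L Z" using full_point_pi_sub(2)[OF gl Z] m(3) by blast
  moreover have "pi_sub L P \<noteq> pi_sub L Z"
    using pi_sub_inj_on_full_points[OF gl P Z] assms(6) by metis
  ultimately show ?thesis
    using psolid_span_pplanes full_point_pi_sub(1)[OF gl P] full_point_pi_sub(1)[OF gl Z]
      m(1) \<open>m \<subseteq> pi_sub L P\<close> by blast
qed

lemma card_qM_points_in_pi_sub_le:
  fixes L :: "('k::{finite,field} ^ 'n) set set"
  assumes gl: "good_line_set L" and M: "psub 4 M" and P: "qM_point L M P"
  shows "card {X. qM_point L M X \<and> X \<subseteq> pi_sub L P \<and> X \<noteq> P} \<le> CARD('k) + 1"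
proof -
  define E where "E = pi_sub L P"
  define Q where "Q = {X. qM_point L M X \<and> X \<subseteq> E \<and> X \<noteq> P}"
  define sol where "sol Z = vec.span (E \<union> pi_sub L Z)" for Z
  have sM: "vec.subspace M" "vec.dim M = 5" using M by (simp_all add: psub_def)
  note full = qM_point_full[OF gl sM(1)]
  have fullP: "ppoint P" "card {l\<in>L. P \<subseteq> l} = CARD('k) + 1" using full[OF P] by simp_all
  have pE: "pplane E" "E \<subseteq> M" using full_point_pi_sub(1)[OF gl fullP] full(3)[OF P]
    by (simp_all add: E_def)
  have sol: "psolid (sol Z) \<and> E \<subseteq> sol Z \<and> pi_sub L Z \<subseteq> sol Z \<and> sol Z \<subseteq> M" if "Z \<in> Q" for Z
  proof -
    have Z: "qM_point L M Z" "Z \<noteq> P" "Z \<subseteq> E" using that by (simp_all add: Q_def)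
    have "E \<union> pi_sub L Z \<subseteq> M" using pE full(3)[OF Z(1)] by simp
    then have "sol Z \<subseteq> M" unfolding sol_def by (rule vec.span_minimal[OF _ sM(1)])
    then show ?thesis
      using psolid_span_pi_subs[OF gl fullP full(1,2)[OF Z(1)] Z(2,3)[unfolded E_def]]
        vec.span_superset[of "E \<union> pi_sub L Z"] by (auto simp: sol_def E_def)
  qed
  have "inj_on sol Q"
  proof (rule inj_onI, rule ccontr)
    fix Z Z' assume Z: "Z \<in> Q" and Z': "Z' \<in> Q" and eq: "sol Z = sol Z'" and "Z \<noteq> Z'"
    have fZ: "ppoint Z" "card {l\<in>L. Z \<subseteq> l} = CARD('k) + 1"
      and fZ': "ppoint Z'" "card {l\<in>L. Z' \<subseteq> l} = CARD('k) + 1"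
      using Z Z' full by (auto simp: Q_def)
    have ne: "pi_sub L Z \<noteq> E" "pi_sub L Z' \<noteq> E" "pi_sub L Z \<noteq> pi_sub L Z'"
      using pi_sub_inj_on_full_points[OF gl] fZ fZ' fullP Z Z' \<open>Z \<noteq> Z'\<close>
      by (auto simp: Q_def E_def)
    have "psolid (sol Z)" "E \<subseteq> sol Z" "pi_sub L Z \<subseteq> sol Z" "pi_sub L Z' \<subseteq> sol Z"
      using sol[OF Z] sol[OF Z'] eq by simp_all
    then show False
      using no_three_full_pplanes_in_psolid[OF gl _ pE(1) full_point_pi_sub(1)[OF gl fZ]
          full_point_pi_sub(1)[OF gl fZ'] ne(1,2)[symmetric] ne(3)]
        full_point_pi_sub(3)[OF gl fullP] full_point_pi_sub(3)[OF gl fZ]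
        full_point_pi_sub(3)[OF gl fZ'] unfolding E_def by blast
  qed
  moreover have "sol ` Q \<subseteq> {C. vec.subspace C \<and> E \<subseteq> C \<and> C \<subseteq> M \<and> vec.dim C = vec.dim E + 1}"
    using sol pE by (auto simp: psub_def)
  ultimately have "card Q
      \<le> card {C. vec.subspace C \<and> E \<subseteq> C \<and> C \<subseteq> M \<and> vec.dim C = vec.dim E + 1}"
    by (rule card_inj_on_le) simp
  also have "\<dots> \<le> CARD('k) + 1"
    by (rule card_subspaces_between_le) (use pE sM in \<open>simp_all add: psub_def\<close>)
  finally show ?thesis by (simp add: Q_def E_def)
qed

lemma card_points_eq_sum_plines_through:
  fixes P E :: "('k::{finite,field} ^ 'n) set" and S :: "('k ^ 'n) set set"
  assumes P: "ppoint P" and sE: "vec.subspace E" and PE: "P \<subseteq> E"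
    and S: "\<And>X. X \<in> S \<Longrightarrow> ppoint X"
  shows "card {X\<in>S. X \<subseteq> E \<and> X \<noteq> P}
    = (\<Sum>m\<in>{m. pline m \<and> P \<subseteq> m \<and> m \<subseteq> E}. card {X\<in>S. X \<subseteq> m \<and> X \<noteq> P})"
proof -
  let ?lines = "{m. pline m \<and> P \<subseteq> m \<and> m \<subseteq> E}"
  have parts: "{X\<in>S. X \<subseteq> E \<and> X \<noteq> P} = (\<Union>m\<in>?lines. {X\<in>S. X \<subseteq> m \<and> X \<noteq> P})"
  proof
    show "{X\<in>S. X \<subseteq> E \<and> X \<noteq> P} \<subseteq> (\<Union>m\<in>?lines. {X\<in>S. X \<subseteq> m \<and> X \<noteq> P})"
    proof
      fix X assume X: "X \<in> {X\<in>S. X \<subseteq> E \<and> X \<noteq> P}"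
      define m where "m = vec.span (P \<union> X)"
      have "pline m" using pline_span_points[OF P S] X by (auto simp: m_def)
      moreover have "P \<subseteq> m" "X \<subseteq> m" using vec.span_superset[of "P \<union> X"] by (auto simp: m_def)
      moreover have "m \<subseteq> E" unfolding m_def by (rule vec.span_minimal[OF _ sE]) (use PE X in auto)
      ultimately show "X \<in> (\<Union>m\<in>?lines. {X\<in>S. X \<subseteq> m \<and> X \<noteq> P})" using X by blast
    qed
  qed auto
  have "card (\<Union>m\<in>?lines. {X\<in>S. X \<subseteq> m \<and> X \<noteq> P})
      = (\<Sum>m\<in>?lines. card {X\<in>S. X \<subseteq> m \<and> X \<noteq> P})"
  proof (rule card_UN_disjoint)
    show "\<forall>m\<in>?lines. \<forall>m'\<in>?lines. m \<noteq> m' \<longrightarrow>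
      {X\<in>S. X \<subseteq> m \<and> X \<noteq> P} \<inter> {X\<in>S. X \<subseteq> m' \<and> X \<noteq> P} = {}"
    proof (intro ballI impI)
      fix m m' assume m: "m \<in> ?lines" "m' \<in> ?lines" "m \<noteq> m'"
      have "X = P" if "X \<in> S" "X \<subseteq> m" "X \<subseteq> m'" for X
        using plines_Int_eq_point[of m m' P] plines_Int_eq_point[of m m' X] m P S that by simp
      then show "{X\<in>S. X \<subseteq> m \<and> X \<noteq> P} \<inter> {X\<in>S. X \<subseteq> m' \<and> X \<noteq> P} = {}" by blast
    qed
  qed simp_all
  then show ?thesis by (simp only: parts)
qed

lemma all_eq_1_if_sum_le_card:
  fixes f :: "'a \<Rightarrow> nat"
  assumes "finite I" "\<And>i. i \<in> I \<Longrightarrow> 1 \<le> f i" "sum f I \<le> card I" "i \<in> I"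
  shows "f i = 1"
proof (rule ccontr)
  assume "f i \<noteq> 1"
  then have "1 < f i" using assms(2,4) by fastforce
  then have "(\<Sum>_\<in>I. 1) < sum f I"
    by (intro sum_strict_mono_ex1) (use assms in auto)
  then show False using assms(3) by simp
qed

theorem corollary1:
  fixes L :: "('k::{finite,field} ^ 'n) set set"
    and M P :: "('k ^ 'n) set"
  assumes "L \<noteq> {}"
    and "good_line_set L"
    and "psub 4 M"
    and "qM_point L M P"
  shows "(\<forall>m. pline m \<and> P \<subseteq> m \<and> m \<subseteq> pi_sub L P \<longrightarrow>
            card {X. qM_point L M X \<and> X \<subseteq> m \<and> X \<noteq> P} = 1)
       \<or> (\<exists>m. pline m \<and> P \<subseteq> m \<and> m \<subseteq> pi_sub L P \<and>
            {X. qM_point L M X \<and> X \<subseteq> m \<and> X \<noteq> P} = {})"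
proof -
  note gl = assms(2)
  have P: "ppoint P" "card {l\<in>L. P \<subseteq> l} = CARD('k) + 1"
    using qM_point_full[OF gl _ assms(4)] assms(3) by (simp_all add: psub_def)
  define lines where "lines = {m. pline m \<and> P \<subseteq> m \<and> m \<subseteq> pi_sub L P}"
  define Q where "Q m = {X. qM_point L M X \<and> X \<subseteq> m \<and> X \<noteq> P}" for m
  have "card lines = CARD('k) + 1" using plines_in_pi_sub_eq[OF gl P] P(2) by (simp add: lines_def)
  moreover have "card {X. qM_point L M X \<and> X \<subseteq> pi_sub L P \<and> X \<noteq> P} = (\<Sum>m\<in>lines. card (Q m))"
    using card_points_eq_sum_plines_through[OF P(1) _ full_point_pi_sub(4)[OF gl P],
        of "Collect (qM_point L M)"] full_point_pi_sub(1)[OF gl P]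
    by (simp add: lines_def Q_def qM_point_def psub_def)
  ultimately have sum_le: "(\<Sum>m\<in>lines. card (Q m)) \<le> card lines"
    using card_qM_points_in_pi_sub_le[OF gl assms(3,4)] by simp
  show ?thesis
  proof (cases "\<exists>m\<in>lines. Q m = {}")
    case True
    then show ?thesis by (auto simp: lines_def Q_def)
  next
    case False
    then have "card (Q m) = 1" if "m \<in> lines" for m
      using all_eq_1_if_sum_le_card[OF _ _ sum_le that] by (simp add: Suc_le_eq card_gt_0_iff)
    then show ?thesis by (simp add: lines_def Q_def)
  qed
qed

end
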